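(* Let $\Gamma$ be a connected finite simple graph. Then $C_3(L(\Gamma))\cong\Gamma$ if and only if all of the following hold: (1) every vertex of $\Gamma$ has degree $2$ or $3$; (2) every vertex of degree $2$ in $\Gamma$ is contained in a triangle; (3) every triangle in $\Gamma$ contains exactly one vertex of degree $2$; (4) distinct triangles in $\Gamma$ share no vertices.
   Context: $L(\Gamma)$ is the line graph of $\Gamma$: its vertices are the edges of $\Gamma$, two being adjacent iff they share an endpoint. For a graph $H$, $C_3(H)$ is the graph whose vertices are the triangles (cliques of order $3$) of $H$, two distinct triangles being adjacent iff they share at least one vertex. *)

theory Defs
  imports Main
begin

definition simple_graph :: "'a set \<Rightarrow> 'a set set \<Rightarrow> bool" where
  "simple_graph V E \<longleftrightarrow> (\<forall>e\<in>E. e \<subseteq> V \<and> card e = 2)"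

definition fin_simple_graph :: "'a set \<Rightarrow> 'a set set \<Rightarrow> bool" where
  "fin_simple_graph V E \<longleftrightarrow> finite V \<and> simple_graph V E"

definition adj :: "'a set set \<Rightarrow> 'a \<Rightarrow> 'a \<Rightarrow> bool" where
  "adj E u v \<longleftrightarrow> {u, v} \<in> E"

definition connected_graph :: "'a set \<Rightarrow> 'a set set \<Rightarrow> bool" where
  "connected_graph V E \<longleftrightarrow> V \<noteq> {} \<and>
     (\<forall>u\<in>V. \<forall>v\<in>V. (u, v) \<in> {(x, y). x \<in> V \<and> y \<in> V \<and> adj E x y}\<^sup>*)"

definition degree :: "'a set set \<Rightarrow> 'a \<Rightarrow> nat" where
  "degree E v = card {e \<in> E. v \<in> e}"

definition triangles :: "'a set \<Rightarrow> 'a set set \<Rightarrow> 'a set set" where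
  "triangles V E = {t. t \<subseteq> V \<and> card t = 3 \<and> (\<forall>u\<in>t. \<forall>v\<in>t. u \<noteq> v \<longrightarrow> adj E u v)}"

definition line_graph_V :: "'a set \<Rightarrow> 'a set set \<Rightarrow> 'a set set" where
  "line_graph_V V E = E"

definition line_graph_E :: "'a set \<Rightarrow> 'a set set \<Rightarrow> 'a set set set" where
  "line_graph_E V E = {{e, f} | e f. e \<in> E \<and> f \<in> E \<and> e \<noteq> f \<and> e \<inter> f \<noteq> {}}"

definition C3_V :: "'a set \<Rightarrow> 'a set set \<Rightarrow> 'a set set" where
  "C3_V V E = triangles V E"

definition C3_E :: "'a set \<Rightarrow> 'a set set \<Rightarrow> 'a set set set" where
  "C3_E V E = {{s, t} | s t. s \<in> triangles V E \<and> t \<in> triangles V E \<and> s \<noteq> t \<and> s \<inter> t \<noteq> {}}"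

definition graph_iso :: "'a set \<Rightarrow> 'a set set \<Rightarrow> 'b set \<Rightarrow> 'b set set \<Rightarrow> bool" where
  "graph_iso V1 E1 V2 E2 \<longleftrightarrow> (\<exists>f. bij_betw f V1 V2 \<and>
     (\<forall>u\<in>V1. \<forall>v\<in>V1. {u, v} \<in> E1 \<longleftrightarrow> {f u, f v} \<in> E2))"

end

theory Submission
  imports Defs
begin

(* The triangles of L(\<Gamma>) are the triples of edges at a common vertex and the edge sets of the
   triangles of \<Gamma>. Under (1)-(4), sending a vertex of degree 3 to its star and a vertex of
   degree 2 to the edge set of its unique triangle is an isomorphism \<Gamma> \<cong> C3(L(\<Gamma>)).

   Conversely, an isomorphism gives |V| = |V(C3(L(\<Gamma>)))| \<le> \<Sum>v (d(v) choose 3) + #triangles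
   and |E| \<ge> |E(C3(L(\<Gamma>)))|. A triple at a vertex of maximal degree \<Delta> has 3(\<Delta> - 3)
   neighbours in C3(L(\<Gamma>)), so \<Delta> \<le> 4. Sorting the edges of C3(L(\<Gamma>)) by the kind of their
   two ends and comparing the two counts leaves no slack: every vertex has degree at least 2, no two
   triangles share an edge and every triangle has at most two vertices of degree at least 3. So
   there is no vertex of degree 4 either (its four triples would span a K4 in \<Gamma>), and the vertices
   of degree 2 correspond one-to-one to the triangles. *)

section \<open>Triangles of the line graph\<close>

definition is_star :: "'a set set \<Rightarrow> bool" where
  "is_star X \<longleftrightarrow> (\<exists>v. \<forall>e\<in>X. v \<in> e)"

definition tri_edges :: "'a set \<Rightarrow> 'a set set" where
  "tri_edges T = {{a, b} | a b. a \<in> T \<and> b \<in> T \<and> a \<noteq> b}"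

lemma is_star_subset: "is_star X \<Longrightarrow> Y \<subseteq> X \<Longrightarrow> is_star Y"
  unfolding is_star_def by blast

lemma tri_edges_eq:
  assumes "a \<noteq> b" "b \<noteq> c" "a \<noteq> c"
  shows "tri_edges {a, b, c} = {{a, b}, {a, c}, {b, c}}"
  unfolding tri_edges_def using assms by (auto simp: insert_commute)

lemma Union_tri_edges:
  assumes "card T = 3"
  shows "\<Union>(tri_edges T) = T"
  using assms by (auto simp: card_3_iff tri_edges_eq)

lemma not_is_star_tri_edges:
  assumes "card T = 3"
  shows "\<not> is_star (tri_edges T)"
  using assms by (auto simp: card_3_iff tri_edges_eq is_star_def)

lemma tri_edges_eq_card_2: "tri_edges A = {e. e \<subseteq> A \<and> card e = 2}"
  unfolding tri_edges_def by (auto simp: card_2_iff)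

lemma inj_on_exchange: "inj_on (\<lambda>(a, b). insert b (S - {a})) (S \<times> (B - S))"
proof (rule inj_onI, clarify)
  fix a b a' b'
  assume ab: "a \<in> S" "b \<in> B" "b \<notin> S" "a' \<in> S" "b' \<in> B" "b' \<notin> S"
    and eq: "insert b (S - {a}) = insert b' (S - {a'})"
  then have b: "b = b'"
    by blast
  then have "S - {a} = S - {a'}"
    using eq ab(3,6) by (metis Diff_insert_absorb Diff_iff)
  then have "a = a'"
    using ab(1,4) by blast
  with b show "a = a' \<and> b = b'"
    by simp
qed

locale fin_graph =
  fixes V :: "'a set" and E :: "'a set set"
  assumes fin_simple: "fin_simple_graph V E"
begin

abbreviation tris :: "'a set set" where
  "tris \<equiv> triangles V E"

abbreviation line_tris :: "'a set set set" where
  "line_tris \<equiv> triangles E (line_graph_E V E)"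

abbreviation C3_edges :: "'a set set set set" where
  "C3_edges \<equiv> C3_E E (line_graph_E V E)"

definition star :: "'a \<Rightarrow> 'a set set" where
  "star v = {e \<in> E. v \<in> e}"

lemma finite_V: "finite V"
  using fin_simple by (simp add: fin_simple_graph_def)

lemma edge_subset: "e \<in> E \<Longrightarrow> e \<subseteq> V"
  using fin_simple by (auto simp: fin_simple_graph_def simple_graph_def)

lemma card_edge: "e \<in> E \<Longrightarrow> card e = 2"
  using fin_simple by (auto simp: fin_simple_graph_def simple_graph_def)

lemma finite_E: "finite E"
  using finite_V edge_subset by (meson Pow_iff finite_Pow_iff finite_subset subsetI)

lemma obtain_edge:
  assumes "e \<in> E"
  obtains a b where "a \<noteq> b" "e = {a, b}"
  using card_edge[OF assms] by (meson card_2_iff)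

lemma obtain_edge_at:
  assumes "e \<in> E" "v \<in> e"
  obtains a where "a \<noteq> v" "e = {v, a}"
  using obtain_edge[OF assms(1)] assms(2) by (metis insert_commute insertE singletonD)

lemma edge_eq:
  assumes "e \<in> E" "u \<in> e" "w \<in> e" "u \<noteq> w"
  shows "e = {u, w}"
  using obtain_edge[OF assms(1)] assms(2-4) by blast

lemma loop_not_edge: "{u, u} \<notin> E"
  using card_edge by fastforce

lemma finite_star: "finite (star v)"
  using finite_E by (simp add: star_def)

lemma degree_eq_card_star: "degree E v = card (star v)"
  by (simp add: degree_def star_def)

lemma is_star_subset_star: "S \<subseteq> star v \<Longrightarrow> is_star S"
  unfolding is_star_def star_def by auto

lemma star_centre_unique:
  assumes "S \<subseteq> star u" "2 \<le> card S" "\<forall>e\<in>S. w \<in> e"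
  shows "u = w"
proof (rule ccontr)
  assume "u \<noteq> w"
  then have "e = {u, w}" if "e \<in> S" for e
    using assms(1,3) that edge_eq[of e u w] unfolding star_def by blast
  then have "S \<subseteq> {{u, w}}"
    by blast
  then have "card S \<le> 1"
    using card_mono[of "{{u, w}}" S] by simp
  then show False
    using assms(2) by simp
qed

lemma star_inter_star_iff:
  assumes "u \<noteq> v"
  shows "star u \<inter> star v \<noteq> {} \<longleftrightarrow> {u, v} \<in> E"
proof
  assume "star u \<inter> star v \<noteq> {}"
  then obtain e where "e \<in> E" "u \<in> e" "v \<in> e"
    unfolding star_def by blast
  then show "{u, v} \<in> E"
    using edge_eq assms by metis
next
  assume "{u, v} \<in> E"
  then show "star u \<inter> star v \<noteq> {}"
    unfolding star_def by blast
qed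

lemma card_le_degree:
  assumes "a \<notin> N" "finite N" "\<forall>x\<in>N. {a, x} \<in> E"
  shows "card N \<le> degree E a"
proof -
  have "inj_on (\<lambda>x. {a, x}) N"
    using assms(1) by (auto simp: inj_on_def doubleton_eq_iff)
  moreover have "(\<lambda>x. {a, x}) ` N \<subseteq> star a"
    using assms(3) by (auto simp: star_def)
  ultimately show ?thesis
    unfolding degree_eq_card_star by (metis card_image card_mono finite_star)
qed

lemma adj_line_graph_iff:
  assumes "e \<noteq> f"
  shows "adj (line_graph_E V E) e f \<longleftrightarrow> e \<in> E \<and> f \<in> E \<and> e \<inter> f \<noteq> {}"
proof
  assume "adj (line_graph_E V E) e f"
  then obtain e' f' where ef: "{e, f} = {e', f'}" "e' \<in> E" "f' \<in> E" "e' \<inter> f' \<noteq> {}"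
    unfolding adj_def line_graph_E_def by blast
  then have "(e = e' \<and> f = f') \<or> (e = f' \<and> f = e')"
    by (simp add: doubleton_eq_iff)
  then show "e \<in> E \<and> f \<in> E \<and> e \<inter> f \<noteq> {}"
    using ef by (metis inf_commute)
next
  assume "e \<in> E \<and> f \<in> E \<and> e \<inter> f \<noteq> {}"
  then show "adj (line_graph_E V E) e f"
    using assms unfolding adj_def line_graph_E_def by blast
qed

lemma mem_line_tris_iff:
  "X \<in> line_tris \<longleftrightarrow> X \<subseteq> E \<and> card X = 3 \<and> (\<forall>e\<in>X. \<forall>f\<in>X. e \<noteq> f \<longrightarrow> e \<inter> f \<noteq> {})"
proof -
  have "(\<forall>e\<in>X. \<forall>f\<in>X. e \<noteq> f \<longrightarrow> adj (line_graph_E V E) e f) \<longleftrightarrow>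
        (\<forall>e\<in>X. \<forall>f\<in>X. e \<noteq> f \<longrightarrow> e \<inter> f \<noteq> {})" if "X \<subseteq> E"
    using that adj_line_graph_iff by (meson subsetD)
  moreover have "X \<in> line_tris \<longleftrightarrow> X \<subseteq> E \<and> card X = 3 \<and>
      (\<forall>e\<in>X. \<forall>f\<in>X. e \<noteq> f \<longrightarrow> adj (line_graph_E V E) e f)"
    by (simp only: triangles_def mem_Collect_eq)
  ultimately show ?thesis
    by meson
qed

lemma C3_edge_iff: "{X, Y} \<in> C3_edges \<longleftrightarrow> X \<in> line_tris \<and> Y \<in> line_tris \<and> X \<noteq> Y \<and> X \<inter> Y \<noteq> {}"
  unfolding C3_E_def by (auto simp: doubleton_eq_iff)

lemma obtain_C3_edge:
  assumes "P \<in> C3_edges"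
  obtains X Y where "P = {X, Y}" "X \<in> line_tris" "Y \<in> line_tris" "X \<noteq> Y" "X \<inter> Y \<noteq> {}"
  using assms unfolding C3_E_def by blast

lemma C3_edge_subset: "P \<in> C3_edges \<Longrightarrow> P \<subseteq> line_tris"
  by (erule obtain_C3_edge) blast

lemma triple_in_star_line_tri: "S \<subseteq> star v \<Longrightarrow> card S = 3 \<Longrightarrow> S \<in> line_tris"
  unfolding mem_line_tris_iff star_def by auto

lemma finite_line_tris: "finite line_tris"
  using finite_E mem_line_tris_iff by (meson Pow_iff finite_Pow_iff finite_subset subsetI)

lemma finite_C3_edges: "finite C3_edges"
  using finite_line_tris C3_edge_subset by (meson Pow_iff finite_Pow_iff finite_subset subsetI)

lemma triangle_adj: "T \<in> tris \<Longrightarrow> x \<in> T \<Longrightarrow> y \<in> T \<Longrightarrow> x \<noteq> y \<Longrightarrow> {x, y} \<in> E"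
  unfolding triangles_def adj_def by blast

lemma triangle_subset: "T \<in> tris \<Longrightarrow> T \<subseteq> V"
  unfolding triangles_def by blast

lemma card_triangle: "T \<in> tris \<Longrightarrow> card T = 3"
  unfolding triangles_def by blast

lemma finite_triangle: "T \<in> tris \<Longrightarrow> finite T"
  using card_triangle by (metis card.infinite zero_neq_numeral)

lemma finite_tris: "finite tris"
  using finite_V triangle_subset by (meson Pow_iff finite_Pow_iff finite_subset subsetI)

lemma triangleI:
  assumes "a \<noteq> b" "b \<noteq> c" "a \<noteq> c" "{a, b} \<in> E" "{a, c} \<in> E" "{b, c} \<in> E"
  shows "{a, b, c} \<in> tris"
  using assms edge_subset unfolding triangles_def adj_def by (auto simp: insert_commute)

lemma tri_edges_in_line_tris:
  assumes "T \<in> tris"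
  shows "tri_edges T \<in> line_tris"
proof -
  obtain a b c where T: "a \<noteq> b" "b \<noteq> c" "a \<noteq> c" "T = {a, b, c}"
    using card_triangle[OF assms] card_3_iff by metis
  have "{a, b} \<in> E" "{a, c} \<in> E" "{b, c} \<in> E"
    using triangle_adj[OF assms] T by auto
  then show ?thesis
    using T by (simp add: mem_line_tris_iff tri_edges_eq doubleton_eq_iff)
qed

lemma tri_edges_subset: "T \<in> tris \<Longrightarrow> tri_edges T \<subseteq> E"
  using tri_edges_in_line_tris mem_line_tris_iff by blast

lemma tri_edges_inj: "S \<in> tris \<Longrightarrow> T \<in> tris \<Longrightarrow> tri_edges S = tri_edges T \<Longrightarrow> S = T"
  using Union_tri_edges card_triangle by metis

lemma line_tri_cases:
  assumes "X \<in> line_tris"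
  shows "(\<exists>v\<in>V. X \<subseteq> star v) \<or> (\<exists>T\<in>tris. X = tri_edges T)"
proof -
  have X: "X \<subseteq> E" "card X = 3" "\<And>e f. e \<in> X \<Longrightarrow> f \<in> X \<Longrightarrow> e \<noteq> f \<Longrightarrow> e \<inter> f \<noteq> {}"
    using assms unfolding mem_line_tris_iff by auto
  obtain e1 e2 e3 where e: "X = {e1, e2, e3}" "e1 \<noteq> e2" "e2 \<noteq> e3" "e1 \<noteq> e3"
    using X(2) card_3_iff by metis
  have inE: "e1 \<in> E" "e2 \<in> E" "e3 \<in> E"
    using X(1) e(1) by auto
  obtain v where v: "v \<in> e1" "v \<in> e2"
    using X(3)[of e1 e2] e by auto
  obtain a where a: "a \<noteq> v" "e1 = {v, a}"
    using obtain_edge_at[OF inE(1) v(1)] .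
  obtain b where b: "b \<noteq> v" "e2 = {v, b}"
    using obtain_edge_at[OF inE(2) v(2)] .
  have "v \<in> V"
    using edge_subset[OF inE(1)] v(1) by auto
  show ?thesis
  proof (cases "v \<in> e3")
    case True
    then have "X \<subseteq> star v"
      using e(1) inE v by (auto simp: star_def)
    with \<open>v \<in> V\<close> show ?thesis by blast
  next
    case False
    have "a \<in> e3" "b \<in> e3"
      using X(3)[of e3 e1] X(3)[of e3 e2] e a b False by auto
    moreover have "a \<noteq> b"
      using a b e(2) by auto
    ultimately have "e3 = {a, b}"
      using edge_eq[OF inE(3)] by blast
    then have "{v, a, b} \<in> tris" "X = tri_edges {v, a, b}"
      using triangleI[of v a b] tri_edges_eq[of v a b] a b \<open>a \<noteq> b\<close> inE e(1) by auto
    then show ?thesis by blast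
  qed
qed

lemma card_union_triangles_le_degree:
  assumes "S \<in> tris" "T \<in> tris" "a \<in> S" "a \<in> T"
  shows "card (S \<union> T) - 1 \<le> degree E a"
proof -
  have "finite (S \<union> T)"
    using finite_triangle assms(1,2) by simp
  moreover have "\<forall>x\<in>S \<union> T - {a}. {a, x} \<in> E"
    using triangle_adj[OF assms(1,3)] triangle_adj[OF assms(2,4)] by blast
  ultimately show ?thesis
    using card_le_degree[of a "S \<union> T - {a}"] assms(3) by simp
qed

lemma two_triangles_degree_ge_3:
  assumes "S \<in> tris" "T \<in> tris" "S \<noteq> T" "a \<in> S" "a \<in> T"
  shows "3 \<le> degree E a"
proof -
  have card: "card S = 3" "card T = 3" and fin: "finite (S \<union> T)"
    using card_triangle finite_triangle assms(1,2) by auto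
  have "card (S \<union> T) \<noteq> 3"
  proof
    assume "card (S \<union> T) = 3"
    then have "S = S \<union> T" "T = S \<union> T"
      by (auto intro!: card_subset_eq[OF fin] simp: card)
    then show False
      using assms(3) by simp
  qed
  moreover have "card S \<le> card (S \<union> T)"
    using fin by (intro card_mono) auto
  ultimately show ?thesis
    using card_union_triangles_le_degree[OF assms(1,2,4,5)] card by simp
qed

end

section \<open>Graphs satisfying the four conditions\<close>

locale admissible_graph = fin_graph +
  assumes degree_2_or_3: "\<forall>v\<in>V. degree E v = 2 \<or> degree E v = 3"
    and degree_2_in_triangle: "\<forall>v\<in>V. degree E v = 2 \<longrightarrow> (\<exists>t\<in>triangles V E. v \<in> t)"
    and one_degree_2_per_triangle: "\<forall>t\<in>triangles V E. card {v \<in> t. degree E v = 2} = 1"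
    and triangles_disjoint: "\<forall>s\<in>triangles V E. \<forall>t\<in>triangles V E. s \<noteq> t \<longrightarrow> s \<inter> t = {}"
begin

definition tri_of :: "'a \<Rightarrow> 'a set" where
  "tri_of v = (THE T. T \<in> tris \<and> v \<in> T)"

definition line_tri_of :: "'a \<Rightarrow> 'a set set" where
  "line_tri_of v = (if degree E v = 3 then star v else tri_edges (tri_of v))"

lemma tri_of_eq: "T \<in> tris \<Longrightarrow> v \<in> T \<Longrightarrow> tri_of v = T"
  unfolding tri_of_def using triangles_disjoint by (intro the_equality) blast+

lemma tri_of_in:
  assumes "v \<in> V" "degree E v = 2"
  shows "tri_of v \<in> tris" "v \<in> tri_of v"
  using degree_2_in_triangle assms tri_of_eq by metis+

lemma neighbour_in_tri_of:
  assumes "v \<in> V" "degree E v = 2" "{v, u} \<in> E"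
  shows "u \<in> tri_of v"
proof -
  let ?T = "tri_of v"
  note T = tri_of_in[OF assms(1,2)]
  have "card (?T - {v}) = 2"
    using card_triangle[OF T(1)] T(2) finite_triangle[OF T(1)] by simp
  moreover have "inj_on (\<lambda>x. {v, x}) (?T - {v})"
    by (auto simp: inj_on_def doubleton_eq_iff)
  moreover have sub: "(\<lambda>x. {v, x}) ` (?T - {v}) \<subseteq> star v"
    using triangle_adj[OF T] by (auto simp: star_def)
  ultimately have "(\<lambda>x. {v, x}) ` (?T - {v}) = star v"
    using card_subset_eq[OF finite_star sub] card_image assms(2) degree_eq_card_star by metis
  moreover have "{v, u} \<in> star v"
    using assms(3) by (simp add: star_def)
  ultimately have "{v, u} \<in> (\<lambda>x. {v, x}) ` (?T - {v})"
    by simp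
  then obtain x where "x \<in> ?T - {v}" "{v, u} = {v, x}"
    by blast
  then show ?thesis
    by (auto simp: doubleton_eq_iff)
qed

lemma line_tri_of_in: "v \<in> V \<Longrightarrow> line_tri_of v \<in> line_tris"
  using degree_2_or_3 triple_in_star_line_tri[of "star v" v] tri_edges_in_line_tris tri_of_in
  by (fastforce simp: line_tri_of_def degree_eq_card_star)

lemma is_star_line_tri_of_iff:
  assumes "v \<in> V"
  shows "is_star (line_tri_of v) \<longleftrightarrow> degree E v = 3"
proof (cases "degree E v = 3")
  case True
  then show ?thesis
    using is_star_subset_star[OF subset_refl] by (simp add: line_tri_of_def)
next
  case False
  then have "degree E v = 2"
    using degree_2_or_3 assms by blast
  then show ?thesis
    using False not_is_star_tri_edges[OF card_triangle[OF tri_of_in(1)[OF assms]]]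
    by (simp add: line_tri_of_def)
qed

lemma star_eq_star:
  assumes "degree E u = 3" "star u = star v"
  shows "u = v"
proof -
  have "2 \<le> card (star u)" "\<forall>e\<in>star u. u \<in> e"
    using assms(1) degree_eq_card_star by (auto simp: star_def)
  then show ?thesis
    using star_centre_unique[of "star u" v u] assms(2) by simp
qed

lemma inj_on_line_tri_of: "inj_on line_tri_of V"
proof (rule inj_onI)
  fix u v
  assume uv: "u \<in> V" "v \<in> V" "line_tri_of u = line_tri_of v"
  then have "degree E u = 3 \<longleftrightarrow> degree E v = 3"
    using is_star_line_tri_of_iff by metis
  then consider "degree E u = 3" "degree E v = 3" | "degree E u = 2" "degree E v = 2"
    using degree_2_or_3 uv by force
  then show "u = v"
  proof cases
    case 1
    then show ?thesis
      using uv(3) star_eq_star by (simp add: line_tri_of_def)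
  next
    case 2
    then have "tri_edges (tri_of u) = tri_edges (tri_of v)"
      using uv(3) by (simp add: line_tri_of_def)
    then have T: "tri_of u = tri_of v"
      using tri_edges_inj tri_of_in uv 2 by metis
    have "card {x \<in> tri_of u. degree E x = 2} = 1"
      using one_degree_2_per_triangle tri_of_in uv 2 by blast
    moreover have "u \<in> {x \<in> tri_of u. degree E x = 2}" "v \<in> {x \<in> tri_of u. degree E x = 2}"
      using tri_of_in uv 2 T by auto
    ultimately show ?thesis
      by (metis card_1_singletonE singletonD)
  qed
qed

lemma line_tri_of_surj:
  assumes "X \<in> line_tris"
  shows "\<exists>v\<in>V. line_tri_of v = X"
  using line_tri_cases[OF assms]
proof
  assume "\<exists>v\<in>V. X \<subseteq> star v"
  then obtain v where v: "v \<in> V" "X \<subseteq> star v"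
    by blast
  have X: "card X = 3"
    using assms mem_line_tris_iff by blast
  moreover have "card X \<le> degree E v"
    using card_mono[OF finite_star v(2)] degree_eq_card_star by simp
  moreover have "degree E v \<in> {2, 3}"
    using degree_2_or_3 v(1) by auto
  ultimately have "degree E v = 3"
    by auto
  moreover have "X = star v"
    using card_subset_eq[OF finite_star v(2)] X calculation degree_eq_card_star by simp
  ultimately show ?thesis
    using v(1) by (auto simp: line_tri_of_def)
next
  assume "\<exists>T\<in>tris. X = tri_edges T"
  then obtain T where T: "T \<in> tris" "X = tri_edges T"
    by blast
  have "card {x \<in> T. degree E x = 2} = 1"
    using one_degree_2_per_triangle T(1) by blast
  then obtain w where "{x \<in> T. degree E x = 2} = {w}"
    by (rule card_1_singletonE)
  then have w: "w \<in> T" "degree E w = 2"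
    by auto
  then have "line_tri_of w = X"
    using tri_of_eq[OF T(1)] T(2) by (simp add: line_tri_of_def)
  then show ?thesis
    using w(1) triangle_subset[OF T(1)] by blast
qed

lemma bij_betw_line_tri_of: "bij_betw line_tri_of V line_tris"
proof -
  have "line_tri_of ` V = line_tris"
  proof
    show "line_tri_of ` V \<subseteq> line_tris"
      using line_tri_of_in by blast
    show "line_tris \<subseteq> line_tri_of ` V"
    proof
      fix X
      assume "X \<in> line_tris"
      then obtain v where "v \<in> V" "line_tri_of v = X"
        using line_tri_of_surj by blast
      then show "X \<in> line_tri_of ` V"
        by blast
    qed
  qed
  then show ?thesis
    using inj_on_line_tri_of by (simp add: bij_betw_def)
qed

lemma star_inter_tri_edges_iff:
  assumes "v \<in> V" "degree E v = 2" "u \<noteq> v"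
  shows "star u \<inter> tri_edges (tri_of v) \<noteq> {} \<longleftrightarrow> {u, v} \<in> E"
proof
  note T = tri_of_in[OF assms(1,2)]
  assume "star u \<inter> tri_edges (tri_of v) \<noteq> {}"
  then have "u \<in> \<Union>(tri_edges (tri_of v))"
    by (auto simp: star_def)
  then have "u \<in> tri_of v"
    by (simp only: Union_tri_edges[OF card_triangle[OF T(1)]])
  then show "{u, v} \<in> E"
    using triangle_adj[OF T(1) _ T(2) assms(3)] by blast
next
  assume uv: "{u, v} \<in> E"
  then have "u \<in> tri_of v"
    using neighbour_in_tri_of[OF assms(1,2)] by (simp add: insert_commute)
  then have "{u, v} \<in> tri_edges (tri_of v)"
    using tri_of_in[OF assms(1,2)] assms(3) unfolding tri_edges_def by blast
  then show "star u \<inter> tri_edges (tri_of v) \<noteq> {}"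
    using uv by (auto simp: star_def)
qed

lemma tri_edges_disjoint:
  assumes "S \<in> tris" "T \<in> tris" "S \<noteq> T"
  shows "tri_edges S \<inter> tri_edges T = {}"
proof (rule ccontr)
  assume "tri_edges S \<inter> tri_edges T \<noteq> {}"
  then obtain e where e: "e \<in> tri_edges S" "e \<in> tri_edges T"
    by blast
  then obtain a b where "e = {a, b}" "a \<in> S"
    unfolding tri_edges_def by blast
  moreover have "e \<subseteq> T"
    using e(2) Union_tri_edges[OF card_triangle[OF assms(2)]] by blast
  ultimately show False
    using triangles_disjoint assms by blast
qed

lemma line_tri_of_inter_iff:
  assumes "u \<in> V" "v \<in> V" "u \<noteq> v"
  shows "line_tri_of u \<inter> line_tri_of v \<noteq> {} \<longleftrightarrow> {u, v} \<in> E"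
proof -
  consider "degree E u = 3" "degree E v = 3" | "degree E u = 3" "degree E v = 2"
    | "degree E u = 2" "degree E v = 3" | "degree E u = 2" "degree E v = 2"
    using degree_2_or_3 assms by blast
  then show ?thesis
  proof cases
    case 1
    then show ?thesis
      using star_inter_star_iff[OF assms(3)] by (simp add: line_tri_of_def)
  next
    case 2
    then show ?thesis
      using star_inter_tri_edges_iff[OF assms(2) _ assms(3)] by (simp add: line_tri_of_def)
  next
    case 3
    then show ?thesis
      using star_inter_tri_edges_iff[OF assms(1) _ assms(3)[symmetric]]
      by (simp add: line_tri_of_def Int_commute insert_commute)
  next
    case 4
    note Tu = tri_of_in[OF assms(1) 4(1)] and Tv = tri_of_in[OF assms(2) 4(2)]
    have "line_tri_of u \<noteq> line_tri_of v"
      using inj_on_line_tri_of assms by (auto dest: inj_onD)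
    then have "tri_of u \<noteq> tri_of v"
      using 4 by (auto simp: line_tri_of_def)
    then have "tri_of u \<inter> tri_of v = {}"
      using triangles_disjoint Tu(1) Tv(1) by blast
    then have "{u, v} \<notin> E"
      using neighbour_in_tri_of[OF assms(1) 4(1)] Tv(2) by blast
    then show ?thesis
      using tri_edges_disjoint[OF Tu(1) Tv(1) \<open>tri_of u \<noteq> tri_of v\<close>] 4
      by (simp add: line_tri_of_def)
  qed
qed

lemma graph_iso_C3_line_graph: "graph_iso line_tris C3_edges V E"
proof -
  let ?g = "the_inv_into V line_tri_of"
  have g: "bij_betw ?g line_tris V"
    using bij_betw_the_inv_into[OF bij_betw_line_tri_of] .
  have "{X, Y} \<in> C3_edges \<longleftrightarrow> {?g X, ?g Y} \<in> E"
    if XY: "X \<in> line_tris" "Y \<in> line_tris" for X Y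
  proof -
    obtain u v where uv: "u \<in> V" "v \<in> V" "X = line_tri_of u" "Y = line_tri_of v"
      using XY line_tri_of_surj by metis
    have inv: "?g X = u" "?g Y = v"
      using uv the_inv_into_f_f[OF inj_on_line_tri_of] by auto
    show ?thesis
    proof (cases "u = v")
      case True
      then show ?thesis
        using uv inv loop_not_edge[of u] C3_edge_iff[of X X] by simp
    next
      case False
      then have "X \<noteq> Y"
        using uv inj_on_line_tri_of by (auto dest: inj_onD)
      then show ?thesis
        using uv inv XY C3_edge_iff line_tri_of_inter_iff[OF uv(1,2) False] by simp
    qed
  qed
  then show ?thesis
    unfolding graph_iso_def using g by blast
qed

end

section \<open>Counting the edges of \<open>C\<^sub>3(L(\<Gamma>))\<close>\<close>

context fin_graph
begin

definition star_triples :: "'a \<Rightarrow> 'a set set set" where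
  "star_triples v = {S. S \<subseteq> star v \<and> card S = 3}"

lemma card_star_triples: "card (star_triples v) = degree E v choose 3"
  unfolding star_triples_def degree_eq_card_star using n_subsets[OF finite_star] by simp

lemma finite_star_triples: "finite (star_triples v)"
  unfolding star_triples_def by (rule finite_subset[of _ "Pow (star v)"]) (auto simp: finite_star)

lemma card_line_tris_le: "card line_tris \<le> (\<Sum>v\<in>V. degree E v choose 3) + card tris"
proof -
  have "line_tris \<subseteq> (\<Union>v\<in>V. star_triples v) \<union> tri_edges ` tris"
  proof
    fix X
    assume X: "X \<in> line_tris"
    then have "card X = 3"
      using mem_line_tris_iff by blast
    then show "X \<in> (\<Union>v\<in>V. star_triples v) \<union> tri_edges ` tris"
      using line_tri_cases[OF X] unfolding star_triples_def by blast
  qed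
  then have "card line_tris \<le> card ((\<Union>v\<in>V. star_triples v) \<union> tri_edges ` tris)"
    using finite_V finite_star_triples finite_tris by (intro card_mono) auto
  also have "\<dots> \<le> card (\<Union>v\<in>V. star_triples v) + card (tri_edges ` tris)"
    by (rule card_Un_le)
  also have "\<dots> \<le> (\<Sum>v\<in>V. card (star_triples v)) + card tris"
    using card_UN_le[OF finite_V, of star_triples] card_image_le[OF finite_tris, of tri_edges]
    by linarith
  finally show ?thesis
    by (simp add: card_star_triples)
qed

text \<open>Exchanging one edge of a triple in the star of \<open>v\<close> for one of the other \<open>d(v) - 3\<close> edges
  gives \<open>3 (d(v) - 3)\<close> neighbours of the triple in \<open>C\<^sub>3(L(\<Gamma>))\<close>.\<close>

lemma C3_degree_star_triple_ge:
  assumes S: "S \<subseteq> star v" "card S = 3"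
  shows "3 * (degree E v - 3) \<le> card {P \<in> C3_edges. S \<in> P}"
proof -
  let ?g = "\<lambda>(a, b). insert b (S - {a})"
  let ?D = "S \<times> (star v - S)"
  have finS: "finite S"
    using finite_subset[OF S(1) finite_star] .
  have "3 * (degree E v - 3) = card ?D"
    using card_cartesian_product[of S "star v - S"] card_Diff_subset[OF finS S(1)] S(2)
      degree_eq_card_star by simp
  also have "\<dots> = card (?g ` ?D)"
    by (rule card_image[OF inj_on_exchange, symmetric])
  also have "\<dots> = card ((\<lambda>Y. {S, Y}) ` ?g ` ?D)"
    by (rule card_image[symmetric]) (auto simp: inj_on_def doubleton_eq_iff)
  also have "\<dots> \<le> card {P \<in> C3_edges. S \<in> P}"
  proof (intro card_mono)
    show "finite {P \<in> C3_edges. S \<in> P}"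
      using finite_C3_edges by simp
    have "{S, ?g p} \<in> C3_edges" if p: "p \<in> ?D" for p
    proof -
      obtain a b where ab: "p = (a, b)" "a \<in> S" "b \<in> star v" "b \<notin> S"
        using p by auto
      have "card (S - {a}) = 2"
        using S(2) ab(2) finS by simp
      then have "card (insert b (S - {a})) = 3" "S - {a} \<noteq> {}"
        using ab(4) finS by (simp, fastforce)
      then have "insert b (S - {a}) \<in> line_tris" "S \<inter> insert b (S - {a}) \<noteq> {}"
        using triple_in_star_line_tri[of "insert b (S - {a})" v] ab S(1) by auto
      moreover have "S \<noteq> insert b (S - {a})"
        using ab(4) by blast
      ultimately show ?thesis
        using C3_edge_iff triple_in_star_line_tri[OF S] ab(1) by simp
    qed
    then show "(\<lambda>Y. {S, Y}) ` ?g ` ?D \<subseteq> {P \<in> C3_edges. S \<in> P}"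
      by blast
  qed
  finally show ?thesis .
qed

definition star_triple_through :: "'a \<Rightarrow> 'a set \<Rightarrow> 'a set set" where
  "star_triple_through x e = (SOME S. S \<subseteq> star x \<and> card S = 3 \<and> e \<in> S)"

lemma star_triple_through:
  assumes "e \<in> star x" "3 \<le> degree E x"
  shows "star_triple_through x e \<subseteq> star x" "card (star_triple_through x e) = 3"
    "e \<in> star_triple_through x e"
proof -
  have "2 \<le> card (star x - {e})"
    using assms degree_eq_card_star finite_star by simp
  then obtain S where S: "S \<subseteq> star x - {e}" "card S = 2" "finite S"
    by (rule obtain_subset_with_card_n)
  moreover have "e \<notin> S"
    using S(1) by blast
  ultimately have "insert e S \<subseteq> star x \<and> card (insert e S) = 3 \<and> e \<in> insert e S"
    using assms(1) by auto
  then have "star_triple_through x e \<subseteq> star x \<and> card (star_triple_through x e) = 3 \<and>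
      e \<in> star_triple_through x e"
    unfolding star_triple_through_def by (rule someI)
  then show "star_triple_through x e \<subseteq> star x" "card (star_triple_through x e) = 3"
      "e \<in> star_triple_through x e"
    by auto
qed

text \<open>The edges of \<open>C\<^sub>3(L(\<Gamma>))\<close> fall into four classes according to which of their two ends are
  stars; two stars are either centred at the same vertex or at the two ends of an edge.\<close>

definition C3_edges_star_star :: "'a set set set set" where
  "C3_edges_star_star = {P \<in> C3_edges. (\<forall>X\<in>P. is_star X) \<and> \<not> is_star (\<Union>P)}"

definition C3_edges_star_tri :: "'a set set set set" where
  "C3_edges_star_tri = {P \<in> C3_edges. (\<exists>X\<in>P. is_star X) \<and> (\<exists>Y\<in>P. \<not> is_star Y)}"

definition C3_edges_same_star :: "'a set set set set" where
  "C3_edges_same_star = {P \<in> C3_edges. is_star (\<Union>P)}"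

definition C3_edges_tri_tri :: "'a set set set set" where
  "C3_edges_tri_tri = {P \<in> C3_edges. \<forall>X\<in>P. \<not> is_star X}"

lemma card_C3_edge_classes_le:
  "card C3_edges_star_star + card C3_edges_star_tri + card C3_edges_same_star
    + card C3_edges_tri_tri \<le> card C3_edges"
proof -
  note defs = C3_edges_star_star_def C3_edges_star_tri_def C3_edges_same_star_def
    C3_edges_tri_tri_def
  have fin: "finite C3_edges_star_star" "finite C3_edges_star_tri" "finite C3_edges_same_star"
    "finite C3_edges_tri_tri"
    using finite_C3_edges unfolding defs by auto
  have nonempty: "P \<noteq> {}" if "P \<in> C3_edges" for P
    using that by (rule obtain_C3_edge) blast
  have "C3_edges_star_star \<inter> C3_edges_star_tri = {}"
    unfolding defs by blast
  moreover have "(C3_edges_star_star \<union> C3_edges_star_tri) \<inter> C3_edges_same_star = {}"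
    unfolding defs using is_star_subset by blast
  moreover have "(C3_edges_star_star \<union> C3_edges_star_tri \<union> C3_edges_same_star)
      \<inter> C3_edges_tri_tri = {}"
    unfolding defs using nonempty is_star_subset[of "\<Union>_"] by blast
  ultimately have "card C3_edges_star_star + card C3_edges_star_tri + card C3_edges_same_star
      + card C3_edges_tri_tri
      = card (C3_edges_star_star \<union> C3_edges_star_tri \<union> C3_edges_same_star \<union> C3_edges_tri_tri)"
    using fin by (simp add: card_Un_disjoint)
  also have "\<dots> \<le> card C3_edges"
    using finite_C3_edges unfolding defs by (intro card_mono) auto
  finally show ?thesis .
qed

definition high_edges :: "'a set set" where
  "high_edges = {e \<in> E. \<forall>x\<in>e. 3 \<le> degree E x}"

definition edge_star_pair :: "'a set \<Rightarrow> 'a set set set" where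
  "edge_star_pair e = (\<lambda>x. star_triple_through x e) ` e"

lemma edge_star_pair_in:
  assumes "e \<in> high_edges"
  shows "edge_star_pair e \<in> C3_edges_star_star"
proof -
  have eE: "e \<in> E"
    using assms unfolding high_edges_def by blast
  obtain u w where uw: "u \<noteq> w" "e = {u, w}"
    using obtain_edge[OF eE] .
  have "3 \<le> degree E u" "3 \<le> degree E w" "e \<in> star u" "e \<in> star w"
    using assms eE uw unfolding high_edges_def star_def by auto
  note su = star_triple_through[OF \<open>e \<in> star u\<close> \<open>3 \<le> degree E u\<close>]
    and sw = star_triple_through[OF \<open>e \<in> star w\<close> \<open>3 \<le> degree E w\<close>]
  have pair: "edge_star_pair e = {star_triple_through u e, star_triple_through w e}"
    using uw by (auto simp: edge_star_pair_def)
  have not_common: "\<not> (\<forall>X\<in>star_triple_through u e \<union> star_triple_through w e. z \<in> X)" for z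
    using star_centre_unique[OF su(1)] star_centre_unique[OF sw(1)] su(2) sw(2) uw(1) by fastforce
  then have "star_triple_through u e \<noteq> star_triple_through w e"
    by (metis Un_absorb sw(1) star_def mem_Collect_eq subsetD)
  moreover have "star_triple_through u e \<inter> star_triple_through w e \<noteq> {}"
    using su(3) sw(3) by blast
  ultimately have "edge_star_pair e \<in> C3_edges"
    using pair C3_edge_iff triple_in_star_line_tri su(1,2) sw(1,2) by simp
  moreover have "\<forall>X\<in>edge_star_pair e. is_star X"
    using pair is_star_subset_star su(1) sw(1) by auto
  moreover have "\<not> is_star (\<Union>(edge_star_pair e))"
    using pair not_common unfolding is_star_def by simp
  ultimately show ?thesis
    unfolding C3_edges_star_star_def by simp
qed

lemma edge_star_pair_inj: "inj_on edge_star_pair high_edges"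
proof (rule inj_onI)
  fix e e'
  assume e: "e \<in> high_edges" "e' \<in> high_edges" "edge_star_pair e = edge_star_pair e'"
  have eE: "e \<in> E" "e' \<in> E"
    using e(1,2) unfolding high_edges_def by auto
  obtain u w where uw: "u \<noteq> w" "e = {u, w}"
    using obtain_edge[OF eE(1)] .
  have "e' \<in> star_triple_through x e'" if "x \<in> e'" for x
    using star_triple_through(3) e(2) eE(2) that unfolding high_edges_def star_def by blast
  then have "e' \<in> X" if "X \<in> edge_star_pair e" for X
    using that e(3) unfolding edge_star_pair_def by blast
  then have "e' \<in> star_triple_through u e" "e' \<in> star_triple_through w e"
    using uw unfolding edge_star_pair_def by auto
  moreover have "star_triple_through u e \<subseteq> star u" "star_triple_through w e \<subseteq> star w"
    using star_triple_through(1) e(1) eE(1) uw unfolding high_edges_def star_def by auto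
  ultimately have "u \<in> e'" "w \<in> e'"
    unfolding star_def by auto
  then show "e = e'"
    using edge_eq[OF eE(2)] uw by metis
qed

lemma card_high_edges_le: "card high_edges \<le> card C3_edges_star_star"
proof -
  have "finite C3_edges_star_star"
    using finite_C3_edges unfolding C3_edges_star_star_def by simp
  then have "card (edge_star_pair ` high_edges) \<le> card C3_edges_star_star"
    using edge_star_pair_in by (intro card_mono) auto
  then show ?thesis
    using card_image[OF edge_star_pair_inj] by simp
qed

definition tri_edge_at :: "'a set \<Rightarrow> 'a \<Rightarrow> 'a set" where
  "tri_edge_at T v = (SOME e. e \<in> tri_edges T \<and> v \<in> e)"

lemma tri_edge_at:
  assumes "T \<in> tris" "v \<in> T"
  shows "tri_edge_at T v \<in> tri_edges T" "tri_edge_at T v \<in> star v"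
proof -
  have "card (T - {v}) = 2"
    using card_triangle[OF assms(1)] finite_triangle[OF assms(1)] assms(2) by simp
  then have "T - {v} \<noteq> {}"
    by (metis card.empty zero_neq_numeral)
  then obtain x where "x \<in> T" "x \<noteq> v"
    by blast
  then have "{v, x} \<in> tri_edges T \<and> v \<in> {v, x}"
    using assms(2) unfolding tri_edges_def by blast
  then have "tri_edge_at T v \<in> tri_edges T \<and> v \<in> tri_edge_at T v"
    unfolding tri_edge_at_def by (rule someI)
  then show "tri_edge_at T v \<in> tri_edges T" "tri_edge_at T v \<in> star v"
    using tri_edges_subset[OF assms(1)] unfolding star_def by auto
qed

definition star_tri_pair :: "'a set \<Rightarrow> 'a \<Rightarrow> 'a set set set" where
  "star_tri_pair T v = {star_triple_through v (tri_edge_at T v), tri_edges T}"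

lemma star_tri_pair_in:
  assumes "T \<in> tris" "v \<in> T" "3 \<le> degree E v"
  shows "star_tri_pair T v \<in> C3_edges_star_tri"
proof -
  note S = star_triple_through[OF tri_edge_at(2)[OF assms(1,2)] assms(3)]
  let ?S = "star_triple_through v (tri_edge_at T v)"
  have stars: "is_star ?S" "\<not> is_star (tri_edges T)"
    using is_star_subset_star[OF S(1)] not_is_star_tri_edges[OF card_triangle[OF assms(1)]] by auto
  then have "?S \<noteq> tri_edges T"
    by metis
  moreover have "?S \<inter> tri_edges T \<noteq> {}"
    using S(3) tri_edge_at(1)[OF assms(1,2)] by blast
  ultimately have "star_tri_pair T v \<in> C3_edges"
    using C3_edge_iff triple_in_star_line_tri[OF S(1,2)] tri_edges_in_line_tris[OF assms(1)]
    unfolding star_tri_pair_def by simp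
  with stars show ?thesis
    unfolding C3_edges_star_tri_def star_tri_pair_def by blast
qed

lemma sum_high_vertices_le:
  "(\<Sum>T\<in>tris. card {v \<in> T. 3 \<le> degree E v}) \<le> card C3_edges_star_tri"
proof -
  let ?I = "Sigma tris (\<lambda>T. {v \<in> T. 3 \<le> degree E v})"
  have inj: "inj_on (\<lambda>(T, v). star_tri_pair T v) ?I"
  proof (rule inj_onI, clarify)
    fix T v T' v'
    assume h: "T \<in> tris" "v \<in> T" "3 \<le> degree E v" "T' \<in> tris" "v' \<in> T'" "3 \<le> degree E v'"
      and eq: "star_tri_pair T v = star_tri_pair T' v'"
    note S = star_triple_through[OF tri_edge_at(2)[OF h(1,2)] h(3)]
      and S' = star_triple_through[OF tri_edge_at(2)[OF h(4,5)] h(6)]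
    have "star_triple_through v (tri_edge_at T v) \<noteq> tri_edges T'"
      using is_star_subset_star[OF S(1)] not_is_star_tri_edges[OF card_triangle[OF h(4)]] by metis
    then have "star_triple_through v (tri_edge_at T v) = star_triple_through v' (tri_edge_at T' v')"
      "tri_edges T = tri_edges T'"
      using eq unfolding star_tri_pair_def by (metis doubleton_eq_iff)+
    moreover have "\<forall>e\<in>star_triple_through v' (tri_edge_at T' v'). v' \<in> e"
      using S'(1) unfolding star_def by auto
    ultimately have "T = T'" "\<forall>e\<in>star_triple_through v (tri_edge_at T v). v' \<in> e"
      using tri_edges_inj[OF h(1,4)] by simp_all
    then show "T = T' \<and> v = v'"
      using star_centre_unique[OF S(1)] S(2) by simp
  qed
  have "(\<lambda>(T, v). star_tri_pair T v) ` ?I \<subseteq> C3_edges_star_tri"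
    using star_tri_pair_in by auto
  moreover have "finite C3_edges_star_tri"
    using finite_C3_edges unfolding C3_edges_star_tri_def by simp
  ultimately have "card ((\<lambda>(T, v). star_tri_pair T v) ` ?I) \<le> card C3_edges_star_tri"
    by (simp add: card_mono)
  then have "card ?I \<le> card C3_edges_star_tri"
    by (simp add: card_image[OF inj])
  moreover have "card ?I = (\<Sum>T\<in>tris. card {v \<in> T. 3 \<le> degree E v})"
    using finite_tris finite_triangle by (intro card_SigmaI) auto
  ultimately show ?thesis
    by simp
qed

lemma star_triple_pair_in:
  assumes "degree E v = 4" "S \<in> star_triples v" "S' \<in> star_triples v" "S \<noteq> S'"
  shows "{S, S'} \<in> C3_edges_same_star"
proof -
  have S: "S \<subseteq> star v" "card S = 3" "S' \<subseteq> star v" "card S' = 3"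
    using assms(2,3) unfolding star_triples_def by auto
  then have fin: "finite S" "finite S'"
    using finite_star finite_subset by blast+
  have "card (S \<union> S') \<le> card (star v)"
    using S by (intro card_mono[OF finite_star]) auto
  moreover have "card (S \<union> S') + card (S \<inter> S') = 6"
    using card_Un_Int[OF fin] S by simp
  ultimately have "card (S \<inter> S') \<noteq> 0"
    using assms(1) degree_eq_card_star by simp
  then have "S \<inter> S' \<noteq> {}"
    by (metis card.empty)
  then have "{S, S'} \<in> C3_edges"
    using C3_edge_iff triple_in_star_line_tri S assms(4) by simp
  moreover have "is_star (\<Union>{S, S'})"
    using is_star_subset_star[of "S \<union> S'" v] S by auto
  ultimately show ?thesis
    unfolding C3_edges_same_star_def by simp
qed

text \<open>At a vertex of degree 4 the four triples of its star are pairwise adjacent in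
  \<open>C\<^sub>3(L(\<Gamma>))\<close>, which gives \<open>6\<close> edges.\<close>

lemma card_degree_4_le: "6 * card {v \<in> V. degree E v = 4} \<le> card C3_edges_same_star"
proof -
  let ?V4 = "{v \<in> V. degree E v = 4}"
  let ?pairs = "\<lambda>v. {P. P \<subseteq> star_triples v \<and> card P = 2}"
  have card_pairs: "card (?pairs v) = 6" if "v \<in> ?V4" for v
    using that card_star_triples n_subsets[OF finite_star_triples, of v 2]
    by (simp add: numeral_eq_Suc)
  have "?pairs v \<subseteq> C3_edges_same_star" if "v \<in> ?V4" for v
  proof
    fix P
    assume "P \<in> ?pairs v"
    then obtain S S' where "P = {S, S'}" "S \<noteq> S'" "S \<in> star_triples v" "S' \<in> star_triples v"
      by (auto simp: card_2_iff)
    then show "P \<in> C3_edges_same_star"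
      using star_triple_pair_in that by blast
  qed
  moreover have "?pairs u \<inter> ?pairs v = {}" if "u \<in> ?V4" "v \<in> ?V4" "u \<noteq> v" for u v
  proof -
    have "star_triples u \<inter> star_triples v = {}"
    proof (rule ccontr)
      assume "star_triples u \<inter> star_triples v \<noteq> {}"
      then obtain S where "S \<subseteq> star u" "card S = 3" "S \<subseteq> star v"
        unfolding star_triples_def by blast
      then show False
        using star_centre_unique[of S u v] \<open>u \<noteq> v\<close> unfolding star_def by auto
    qed
    then show ?thesis
      by (auto simp: card_2_iff)
  qed
  moreover have "finite (?pairs v)" for v
    by (rule finite_subset[of _ "Pow (star_triples v)"]) (auto simp: finite_star_triples)
  moreover have "finite ?V4" "finite C3_edges_same_star"
    using finite_V finite_C3_edges unfolding C3_edges_same_star_def by auto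
  ultimately have "(\<Sum>v\<in>?V4. card (?pairs v)) \<le> card C3_edges_same_star"
    by (subst card_UN_disjoint[symmetric]) (auto intro!: card_mono)
  then show ?thesis
    using card_pairs by simp
qed

definition low_vertices :: "'a set" where
  "low_vertices = {v \<in> V. degree E v \<le> 2}"

lemma finite_low_vertices: "finite low_vertices"
  using finite_V unfolding low_vertices_def by simp

definition low_edges :: "'a set set" where
  "low_edges = {e \<in> E. e \<subseteq> low_vertices}"

lemma card_E_eq: "card E = card high_edges + card {e \<in> E. e \<inter> low_vertices \<noteq> {}}"
proof -
  have "E = high_edges \<union> {e \<in> E. e \<inter> low_vertices \<noteq> {}}"
    "high_edges \<inter> {e \<in> E. e \<inter> low_vertices \<noteq> {}} = {}"
    using edge_subset unfolding high_edges_def low_vertices_def by force+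
  then show ?thesis
    using finite_E by (metis card_Un_disjoint finite_Un)
qed

lemma sum_degree_eq: "finite A \<Longrightarrow> (\<Sum>v\<in>A. degree E v) = (\<Sum>e\<in>E. card (e \<inter> A))"
proof -
  assume "finite A"
  have "(\<Sum>v\<in>A. degree E v) = (\<Sum>v\<in>A. \<Sum>e\<in>E. of_bool (v \<in> e))"
    using finite_E by (simp add: degree_def Int_def)
  also have "\<dots> = (\<Sum>e\<in>E. \<Sum>v\<in>A. of_bool (v \<in> e))"
    by (rule sum.swap)
  also have "\<dots> = (\<Sum>e\<in>E. card (e \<inter> A))"
    using \<open>finite A\<close> by (simp add: Int_def conj_commute)
  finally show ?thesis .
qed

text \<open>Each edge meeting a vertex of degree at most 2 is counted at least once in the degree sum
  of these vertices, and twice if both its ends have degree at most 2.\<close>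

lemma card_edges_at_low_le:
  "card {e \<in> E. e \<inter> low_vertices \<noteq> {}} + card low_edges \<le> (\<Sum>v\<in>low_vertices. degree E v)"
proof -
  have "of_bool (e \<inter> low_vertices \<noteq> {}) + of_bool (e \<subseteq> low_vertices) \<le> card (e \<inter> low_vertices)"
    if "e \<in> E" for e
  proof -
    have "finite e" "card e = 2"
      using card_edge[OF that] by (auto intro: card_ge_0_finite)
    then show ?thesis
      by (cases "e \<subseteq> low_vertices") (auto simp: Int_absorb2 card_gt_0_iff Suc_le_eq)
  qed
  then have "(\<Sum>e\<in>E. of_bool (e \<inter> low_vertices \<noteq> {}) + of_bool (e \<subseteq> low_vertices))
      \<le> (\<Sum>e\<in>E. card (e \<inter> low_vertices))"
    by (rule sum_mono)
  then show ?thesis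
    using finite_E finite_low_vertices by (simp add: sum.distrib sum_degree_eq low_edges_def Int_def)
qed

lemma sum_low_edges_in_tris_le: "(\<Sum>T\<in>tris. card {e \<in> low_edges. e \<subseteq> T}) \<le> card low_edges"
proof -
  have disj: "{e \<in> low_edges. e \<subseteq> S} \<inter> {e \<in> low_edges. e \<subseteq> T} = {}"
    if "S \<in> tris" "T \<in> tris" "S \<noteq> T" for S T
  proof (rule ccontr)
    assume "{e \<in> low_edges. e \<subseteq> S} \<inter> {e \<in> low_edges. e \<subseteq> T} \<noteq> {}"
    then obtain e where e: "e \<in> low_edges" "e \<subseteq> S" "e \<subseteq> T"
      by blast
    then obtain a b where "a \<noteq> b" "e = {a, b}"
      using obtain_edge unfolding low_edges_def by blast
    then show False
      using e two_triangles_degree_ge_3[OF that, of a] unfolding low_edges_def low_vertices_def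
      by auto
  qed
  have fin: "\<forall>T\<in>tris. finite {e \<in> low_edges. e \<subseteq> T}"
    using finite_E unfolding low_edges_def by simp
  have "(\<Sum>T\<in>tris. card {e \<in> low_edges. e \<subseteq> T}) = card (\<Union>T\<in>tris. {e \<in> low_edges. e \<subseteq> T})"
    using card_UN_disjoint[OF finite_tris fin] disj by simp
  also have "\<dots> \<le> card low_edges"
    using finite_E unfolding low_edges_def by (intro card_mono) auto
  finally show ?thesis .
qed

lemma two_le_high_plus_low_edges:
  assumes T: "T \<in> tris"
  shows "2 \<le> card {v \<in> T. 3 \<le> degree E v} + card {e \<in> low_edges. e \<subseteq> T}"
proof -
  let ?H = "{v \<in> T. 3 \<le> degree E v}" and ?L = "T \<inter> low_vertices"
  have fin: "finite T"
    using finite_triangle[OF T] .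
  have "T = ?H \<union> ?L" "?H \<inter> ?L = {}"
    using triangle_subset[OF T] unfolding low_vertices_def by auto
  then have card_HL: "card ?H + card ?L = 3"
    using card_Un_disjoint[of ?H ?L] fin card_triangle[OF T] by (metis finite_Int finite_Un)
  have "tri_edges ?L \<subseteq> {e \<in> low_edges. e \<subseteq> T}"
    using triangle_adj[OF T] unfolding tri_edges_def low_edges_def by blast
  then have "card (tri_edges ?L) \<le> card {e \<in> low_edges. e \<subseteq> T}"
    using finite_E by (intro card_mono) (simp_all add: low_edges_def)
  moreover have "card (tri_edges ?L) = card ?L choose 2"
    unfolding tri_edges_eq_card_2 using n_subsets[of ?L 2] fin by simp
  ultimately have "card ?L choose 2 \<le> card {e \<in> low_edges. e \<subseteq> T}"
    by simp
  moreover have "card ?L \<in> {0, 1, 2, 3}"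
    using card_HL by auto
  ultimately show ?thesis
    using card_HL by (auto simp: numeral_eq_Suc)
qed

lemma clique_4_high_triangle:
  assumes "W \<subseteq> V" "card W = 4" "\<forall>x\<in>W. \<forall>y\<in>W. x \<noteq> y \<longrightarrow> {x, y} \<in> E"
  shows "\<exists>T\<in>tris. \<forall>x\<in>T. 3 \<le> degree E x"
proof -
  have fin: "finite W"
    using assms(2) by (metis card.infinite zero_neq_numeral)
  have "3 \<le> card W"
    using assms(2) by simp
  then obtain T where T: "T \<subseteq> W" "card T = 3"
    by (rule obtain_subset_with_card_n)
  have "T \<subseteq> V" "\<forall>u\<in>T. \<forall>v\<in>T. u \<noteq> v \<longrightarrow> adj E u v"
    using T(1) assms(1,3) unfolding adj_def by blast+
  then have "T \<in> tris"
    using T(2) unfolding triangles_def by simp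
  moreover have "3 \<le> degree E x" if "x \<in> W" for x
  proof -
    have "\<forall>y\<in>W - {x}. {x, y} \<in> E"
      using assms(3) that by auto
    then show ?thesis
      using card_le_degree[of x "W - {x}"] fin assms(2) that by simp
  qed
  ultimately show ?thesis
    using T(1) by blast
qed

end

lemma choose_3_le:
  assumes "(d::nat) \<le> 4"
  shows "d choose 3 \<le> of_bool (3 \<le> d) + 3 * of_bool (d = 4)"
proof -
  have "d = 0 \<or> d = 1 \<or> d = 2 \<or> d = 3 \<or> d = 4"
    using assms by arith
  then show ?thesis
    by (auto simp: numeral_eq_Suc)
qed

section \<open>Graphs isomorphic to \<open>C\<^sub>3(L(\<Gamma>))\<close>\<close>

locale C3_line_graph_iso = fin_graph +
  fixes f :: "'a set set \<Rightarrow> 'a"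
  assumes bij: "bij_betw f (triangles E (line_graph_E V E)) V"
    and adj_iff: "\<And>X Y. X \<in> triangles E (line_graph_E V E) \<Longrightarrow> Y \<in> triangles E (line_graph_E V E)
      \<Longrightarrow> {X, Y} \<in> C3_E E (line_graph_E V E) \<longleftrightarrow> {f X, f Y} \<in> E"
begin

lemma card_V_eq: "card V = card line_tris"
  using bij_betw_same_card[OF bij] by simp

lemma image_C3_edge: "P \<in> C3_edges \<Longrightarrow> f ` P \<in> E"
  by (erule obtain_C3_edge) (use adj_iff C3_edge_iff in auto)

lemma inj_on_image_C3_edges: "inj_on ((`) f) C3_edges"
  using bij C3_edge_subset by (auto intro!: inj_onI simp: bij_betw_def inj_on_image_eq_iff)

lemma card_C3_edges_le: "card C3_edges \<le> card E"
  using card_image[OF inj_on_image_C3_edges] card_mono[OF finite_E] image_C3_edge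
  by (metis image_subsetI)

lemma C3_degree_le_degree:
  assumes "X \<in> line_tris"
  shows "card {P \<in> C3_edges. X \<in> P} \<le> degree E (f X)"
proof -
  have "(`) f ` {P \<in> C3_edges. X \<in> P} \<subseteq> star (f X)"
    using image_C3_edge unfolding star_def by blast
  then have "card ((`) f ` {P \<in> C3_edges. X \<in> P}) \<le> degree E (f X)"
    using card_mono[OF finite_star] degree_eq_card_star by metis
  moreover have "inj_on ((`) f) {P \<in> C3_edges. X \<in> P}"
    using inj_on_image_C3_edges by (rule inj_on_subset) blast
  ultimately show ?thesis
    by (simp add: card_image)
qed

text \<open>A triple at a vertex of maximal degree \<open>\<Delta> \<ge> 5\<close> would have \<open>3 (\<Delta> - 3) > \<Delta>\<close> neighbours.\<close>

lemma degree_le_4: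
  assumes "v \<in> V"
  shows "degree E v \<le> 4"
proof -
  let ?M = "Max (degree E ` V)"
  have fin: "finite (degree E ` V)"
    using finite_V by simp
  obtain v0 where v0: "v0 \<in> V" "degree E v0 = ?M"
    using Max_in[OF fin] assms by (metis empty_iff imageE image_is_empty)
  have "?M \<le> 4"
  proof (rule ccontr)
    assume "\<not> ?M \<le> 4"
    then have "3 \<le> card (star v0)"
      using v0 degree_eq_card_star by simp
    then obtain S where S: "S \<subseteq> star v0" "card S = 3"
      by (rule obtain_subset_with_card_n)
    have "3 * (?M - 3) \<le> card {P \<in> C3_edges. S \<in> P}"
      using C3_degree_star_triple_ge[OF S] v0(2) by simp
    also have "\<dots> \<le> degree E (f S)"
      using C3_degree_le_degree[OF triple_in_star_line_tri[OF S]] .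
    also have "\<dots> \<le> ?M"
      using Max_ge[OF fin] bij_betwE[OF bij] triple_in_star_line_tri[OF S] by blast
    finally show False
      using \<open>\<not> ?M \<le> 4\<close> by simp
  qed
  then show ?thesis
    using Max_ge[OF fin] assms by fastforce
qed

lemma card_V_le:
  "card V \<le> card {v \<in> V. 3 \<le> degree E v} + 3 * card {v \<in> V. degree E v = 4} + card tris"
proof -
  have "(\<Sum>v\<in>V. degree E v choose 3)
      \<le> (\<Sum>v\<in>V. of_bool (3 \<le> degree E v) + 3 * of_bool (degree E v = 4))"
    using choose_3_le degree_le_4 by (intro sum_mono) simp
  also have "\<dots> = card {v \<in> V. 3 \<le> degree E v} + 3 * card {v \<in> V. degree E v = 4}"
    using finite_V by (simp add: sum.distrib sum_distrib_left[symmetric] Int_def)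
  finally show ?thesis
    using card_line_tris_le card_V_eq by linarith
qed

text \<open>The counting argument: comparing \<open>|V(\<Gamma>)| = |V(C\<^sub>3(L(\<Gamma>)))|\<close> and \<open>|E(\<Gamma>)| \<ge> |E(C\<^sub>3(L(\<Gamma>)))|\<close>
  with the lower bounds for the four classes of edges of \<open>C\<^sub>3(L(\<Gamma>))\<close> leaves no slack at all.\<close>

lemma triangle_excess_le:
  "(\<Sum>T\<in>tris. card {v \<in> T. 3 \<le> degree E v} + card {e \<in> low_edges. e \<subseteq> T})
    + card C3_edges_tri_tri + (\<Sum>v\<in>low_vertices. 2 - degree E v) \<le> (\<Sum>T\<in>tris. 2)"
proof -
  let ?H = "{v \<in> V. 3 \<le> degree E v}" and ?V4 = "{v \<in> V. degree E v = 4}"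
  have "V = ?H \<union> low_vertices"
    unfolding low_vertices_def by auto
  moreover have "card (?H \<union> low_vertices) = card ?H + card low_vertices"
    by (rule card_Un_disjoint) (use finite_V in \<open>auto simp: low_vertices_def\<close>)
  ultimately have "card V = card ?H + card low_vertices"
    by simp
  moreover have "(\<Sum>v\<in>low_vertices. degree E v) + (\<Sum>v\<in>low_vertices. 2 - degree E v)
      = 2 * card low_vertices"
    by (simp add: sum.distrib[symmetric] low_vertices_def)
  moreover have "card high_edges + (\<Sum>T\<in>tris. card {v \<in> T. 3 \<le> degree E v}) + 6 * card ?V4
      + card C3_edges_tri_tri \<le> card E"
    using card_high_edges_le sum_high_vertices_le card_degree_4_le card_C3_edge_classes_le
      card_C3_edges_le by linarith
  moreover have "(\<Sum>T\<in>tris. card {v \<in> T. 3 \<le> degree E v} + card {e \<in> low_edges. e \<subseteq> T})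
      = (\<Sum>T\<in>tris. card {v \<in> T. 3 \<le> degree E v}) + (\<Sum>T\<in>tris. card {e \<in> low_edges. e \<subseteq> T})"
    by (rule sum.distrib)
  moreover have "(\<Sum>T\<in>tris. 2) = 2 * card tris"
    by simp
  ultimately show ?thesis
    using card_V_le card_E_eq card_edges_at_low_le sum_low_edges_in_tris_le by linarith
qed

lemma triangle_excess_tight:
  "card C3_edges_tri_tri = 0" "(\<Sum>v\<in>low_vertices. 2 - degree E v) = 0"
  "(\<Sum>T\<in>tris. card {v \<in> T. 3 \<le> degree E v} + card {e \<in> low_edges. e \<subseteq> T}) = (\<Sum>T\<in>tris. 2)"
proof -
  have "(\<Sum>T\<in>tris. 2) \<le> (\<Sum>T\<in>tris. card {v \<in> T. 3 \<le> degree E v} + card {e \<in> low_edges. e \<subseteq> T})"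
    using two_le_high_plus_low_edges by (intro sum_mono) simp
  then show "card C3_edges_tri_tri = 0" "(\<Sum>v\<in>low_vertices. 2 - degree E v) = 0"
    "(\<Sum>T\<in>tris. card {v \<in> T. 3 \<le> degree E v} + card {e \<in> low_edges. e \<subseteq> T}) = (\<Sum>T\<in>tris. 2)"
    using triangle_excess_le by linarith+
qed

lemma C3_edges_tri_tri_empty: "C3_edges_tri_tri = {}"
  using triangle_excess_tight(1) finite_C3_edges unfolding C3_edges_tri_tri_def by simp

lemma low_vertex_degree_eq_2:
  assumes "v \<in> low_vertices"
  shows "degree E v = 2"
proof -
  have "2 - degree E v = 0"
    using triangle_excess_tight(2) assms finite_low_vertices by (simp add: sum_eq_0_iff)
  then show ?thesis
    using assms unfolding low_vertices_def by simp
qed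

lemma card_high_vertices_triangle_le_2:
  assumes "T \<in> tris"
  shows "card {v \<in> T. 3 \<le> degree E v} \<le> 2"
  using sum_mono_inv[OF triangle_excess_tight(3)[symmetric] _ assms finite_tris]
    two_le_high_plus_low_edges by fastforce

text \<open>The four triples in the star of a vertex of degree 4 are pairwise adjacent in
  \<open>C\<^sub>3(L(\<Gamma>))\<close>, so their images span a \<open>K\<^sub>4\<close>.\<close>

lemma degree_4_clique:
  assumes "v \<in> V" "degree E v = 4"
  shows "\<exists>W\<subseteq>V. card W = 4 \<and> (\<forall>x\<in>W. \<forall>y\<in>W. x \<noteq> y \<longrightarrow> {x, y} \<in> E)"
proof -
  let ?g = "\<lambda>e. f (star v - {e})"
  have X: "star v - {e} \<in> star_triples v" if "e \<in> star v" for e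
    using that assms(2) degree_eq_card_star finite_star unfolding star_triples_def by auto
  have X_line_tri: "star v - {e} \<in> line_tris" if "e \<in> star v" for e
    using X[OF that] triple_in_star_line_tri unfolding star_triples_def by blast
  have adj: "{?g e, ?g e'} \<in> E" if "e \<in> star v" "e' \<in> star v" "e \<noteq> e'" for e e'
  proof -
    have "star v - {e} \<noteq> star v - {e'}"
      using that by blast
    then have "{star v - {e}, star v - {e'}} \<in> C3_edges"
      using star_triple_pair_in[OF assms(2) X[OF that(1)] X[OF that(2)]]
      unfolding C3_edges_same_star_def by blast
    then have "f ` {star v - {e}, star v - {e'}} \<in> E"
      by (rule image_C3_edge)
    then show ?thesis
      by simp
  qed
  have inj: "inj_on ?g (star v)"
  proof (rule inj_onI, rule ccontr)
    fix e e'
    assume "e \<in> star v" "e' \<in> star v" "?g e = ?g e'" "e \<noteq> e'"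
    then show False
      using adj[of e e'] loop_not_edge by simp
  qed
  have "card (?g ` star v) = 4"
    using card_image[OF inj] assms(2) degree_eq_card_star by simp
  moreover have "?g ` star v \<subseteq> V"
    using X_line_tri bij_betwE[OF bij]
    by (intro image_subsetI) blast
  moreover have "\<forall>x\<in>?g ` star v. \<forall>y\<in>?g ` star v. x \<noteq> y \<longrightarrow> {x, y} \<in> E"
  proof (intro ballI impI)
    fix x y
    assume "x \<in> ?g ` star v" "y \<in> ?g ` star v" "x \<noteq> y"
    then obtain e e' where "e \<in> star v" "e' \<in> star v" "x = ?g e" "y = ?g e'"
      by blast
    moreover have "e \<noteq> e'"
      using \<open>x \<noteq> y\<close> calculation by blast
    ultimately show "{x, y} \<in> E"
      using adj[of e e'] by simp
  qed
  ultimately show ?thesis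
    by blast
qed

lemma no_degree_4:
  assumes "v \<in> V"
  shows "degree E v \<noteq> 4"
proof
  assume "degree E v = 4"
  then obtain W where "W \<subseteq> V" "card W = 4" "\<forall>x\<in>W. \<forall>y\<in>W. x \<noteq> y \<longrightarrow> {x, y} \<in> E"
    using degree_4_clique[OF assms] by blast
  then obtain T where T: "T \<in> tris" "\<forall>x\<in>T. 3 \<le> degree E x"
    using clique_4_high_triangle[of W] by blast
  then have "{x \<in> T. 3 \<le> degree E x} = T"
    by blast
  then show False
    using card_high_vertices_triangle_le_2[OF T(1)] card_triangle[OF T(1)] by simp
qed

end

context C3_line_graph_iso
begin

lemma degree_2_or_3:
  assumes "v \<in> V"
  shows "degree E v = 2 \<or> degree E v = 3"
proof -
  have "degree E v \<le> 3"
    using degree_le_4[OF assms] no_degree_4[OF assms] by simp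
  moreover have "degree E v \<le> 2 \<Longrightarrow> degree E v = 2"
    using low_vertex_degree_eq_2 assms unfolding low_vertices_def by blast
  ultimately show ?thesis
    by linarith
qed

lemma card_degree_2_le: "card {v \<in> V. degree E v = 2} \<le> card tris"
proof -
  let ?H = "{v \<in> V. 3 \<le> degree E v}" and ?L = "{v \<in> V. degree E v = 2}"
  have "V = ?H \<union> ?L"
    using degree_2_or_3 by force
  moreover have "card (?H \<union> ?L) = card ?H + card ?L"
    by (rule card_Un_disjoint) (use finite_V in auto)
  moreover have no_4: "{v \<in> V. degree E v = 4} = {}"
    using no_degree_4 by blast
  then have "card V \<le> card ?H + card tris"
    using card_V_le unfolding no_4 by simp
  ultimately show ?thesis
    by simp
qed

lemma degree_2_vertex_in_triangle:
  assumes "T \<in> tris"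
  shows "{v \<in> T. degree E v = 2} \<noteq> {}"
proof
  assume "{v \<in> T. degree E v = 2} = {}"
  then have "{v \<in> T. 3 \<le> degree E v} = T"
    using degree_2_or_3 triangle_subset[OF assms] by fastforce
  then show False
    using card_high_vertices_triangle_le_2[OF assms] card_triangle[OF assms] by simp
qed

text \<open>Every triangle contains a vertex of degree 2, no such vertex lies in two triangles, and there
  are at most as many of them as triangles: so they correspond one-to-one to the triangles.\<close>

lemma degree_2_vertices:
  shows "(\<Union>T\<in>tris. {v \<in> T. degree E v = 2}) = {v \<in> V. degree E v = 2}"
    and "T \<in> tris \<Longrightarrow> card {v \<in> T. degree E v = 2} = 1"
proof -
  let ?D = "\<lambda>T. {v \<in> T. degree E v = 2}" and ?L = "{v \<in> V. degree E v = 2}"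
  have fin: "\<forall>T\<in>tris. finite (?D T)" "finite ?L"
    using finite_triangle finite_V by auto
  have disj: "\<forall>S\<in>tris. \<forall>T\<in>tris. S \<noteq> T \<longrightarrow> ?D S \<inter> ?D T = {}"
    using two_triangles_degree_ge_3 by fastforce
  have sub: "(\<Union>T\<in>tris. ?D T) \<subseteq> ?L"
    using triangle_subset by blast
  have one: "\<forall>T\<in>tris. 1 \<le> card (?D T)"
    using degree_2_vertex_in_triangle fin(1) by (simp add: Suc_le_eq card_gt_0_iff)
  have "card tris \<le> (\<Sum>T\<in>tris. card (?D T))"
    using one sum_mono[of tris "\<lambda>_. 1" "\<lambda>T. card (?D T)"] by simp
  moreover have "(\<Sum>T\<in>tris. card (?D T)) = card (\<Union>T\<in>tris. ?D T)"
    using card_UN_disjoint[OF finite_tris fin(1) disj] by simp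
  moreover have "card (\<Union>T\<in>tris. ?D T) \<le> card ?L"
    using card_mono[OF fin(2) sub] .
  ultimately have eq: "card (\<Union>T\<in>tris. ?D T) = card ?L"
    "(\<Sum>T\<in>tris. card (?D T)) = (\<Sum>T\<in>tris. 1)"
    using card_degree_2_le by simp_all
  show "(\<Union>T\<in>tris. ?D T) = ?L"
    using card_subset_eq[OF fin(2) sub eq(1)] .
  show "card (?D T) = 1" if "T \<in> tris"
    using sum_mono_inv[OF eq(2)[symmetric] _ that finite_tris] one by fastforce
qed

lemma triangles_share_no_edge:
  assumes "S \<in> tris" "T \<in> tris" "S \<noteq> T"
  shows "tri_edges S \<inter> tri_edges T = {}"
proof (rule ccontr)
  assume "tri_edges S \<inter> tri_edges T \<noteq> {}"
  moreover have "tri_edges S \<noteq> tri_edges T"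
    using tri_edges_inj assms by blast
  ultimately have "{tri_edges S, tri_edges T} \<in> C3_edges_tri_tri"
    using C3_edge_iff tri_edges_in_line_tris assms(1,2)
      not_is_star_tri_edges[OF card_triangle[OF assms(1)]]
      not_is_star_tri_edges[OF card_triangle[OF assms(2)]]
    unfolding C3_edges_tri_tri_def by simp
  then show False
    using C3_edges_tri_tri_empty by simp
qed

text \<open>Triangles sharing exactly one vertex would give it degree 4.\<close>

lemma triangles_disjoint:
  assumes "S \<in> tris" "T \<in> tris" "S \<noteq> T"
  shows "S \<inter> T = {}"
proof (rule ccontr)
  assume "S \<inter> T \<noteq> {}"
  then obtain x where x: "x \<in> S" "x \<in> T"
    by blast
  have "y = x" if "y \<in> S" "y \<in> T" for y
  proof (rule ccontr)
    assume "y \<noteq> x"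
    then have "{x, y} \<in> tri_edges S \<inter> tri_edges T"
      using x that unfolding tri_edges_def by blast
    then show False
      using triangles_share_no_edge[OF assms] by blast
  qed
  then have "S \<inter> T = {x}"
    using x by blast
  then have "card (S \<union> T) = 5"
    using card_Un_Int[of S T] finite_triangle card_triangle assms(1,2) by simp
  then have "4 \<le> degree E x"
    using card_union_triangles_le_degree[OF assms(1,2) x] by simp
  then show False
    using degree_2_or_3 triangle_subset assms(1) x(1) by fastforce
qed

end

theorem theorem6:
  fixes V :: "'a set" and E :: "'a set set"
  assumes "fin_simple_graph V E" and "connected_graph V E"
  shows "graph_iso (C3_V (line_graph_V V E) (line_graph_E V E))
                   (C3_E (line_graph_V V E) (line_graph_E V E)) V E
    \<longleftrightarrow> ((\<forall>v\<in>V. degree E v = 2 \<or> degree E v = 3)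
       \<and> (\<forall>v\<in>V. degree E v = 2 \<longrightarrow> (\<exists>t\<in>triangles V E. v \<in> t))
       \<and> (\<forall>t\<in>triangles V E. card {v \<in> t. degree E v = 2} = 1)
       \<and> (\<forall>s\<in>triangles V E. \<forall>t\<in>triangles V E. s \<noteq> t \<longrightarrow> s \<inter> t = {}))"
    (is "?iso \<longleftrightarrow> ?conditions")
proof
  assume ?iso
  then obtain f where "bij_betw f (triangles E (line_graph_E V E)) V"
    "\<forall>X\<in>triangles E (line_graph_E V E). \<forall>Y\<in>triangles E (line_graph_E V E).
      {X, Y} \<in> C3_E E (line_graph_E V E) \<longleftrightarrow> {f X, f Y} \<in> E"
    unfolding graph_iso_def C3_V_def line_graph_V_def by blast
  then interpret C3_line_graph_iso V E f
    using assms(1) by unfold_locales (auto simp: fin_graph_def)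
  show ?conditions
  proof (intro conjI)
    show "\<forall>v\<in>V. degree E v = 2 \<or> degree E v = 3"
      using degree_2_or_3 by blast
    show "\<forall>v\<in>V. degree E v = 2 \<longrightarrow> (\<exists>t\<in>triangles V E. v \<in> t)"
      using degree_2_vertices(1) by blast
    show "\<forall>t\<in>triangles V E. card {v \<in> t. degree E v = 2} = 1"
      using degree_2_vertices(2) by blast
    show "\<forall>s\<in>triangles V E. \<forall>t\<in>triangles V E. s \<noteq> t \<longrightarrow> s \<inter> t = {}"
      using triangles_disjoint by blast
  qed
next
  assume ?conditions
  then interpret admissible_graph V E
    using assms(1) by unfold_locales (auto simp: fin_graph_def)
  show ?iso
    using graph_iso_C3_line_graph unfolding C3_V_def line_graph_V_def .
qed

end
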